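(* Every generalized Krull domain (in particular, every Noetherian integrally closed domain) is perinormal.
   Context: All rings are commutative with identity; "local" means having a unique maximal ideal; an overring of a domain $R$ is a ring between $R$ and its fraction field. A ring extension $A \subseteq B$ satisfies going-down if whenever $\mathfrak{p} \subset \mathfrak{q}$ are primes of $A$ and $Q$ is a prime of $B$ with $Q \cap A = \mathfrak{q}$, there is a prime $P \subseteq Q$ of $B$ with $P \cap A = \mathfrak{p}$. A domain $R$ is perinormal if every local overring $S$ of $R$ such that $R \subseteq S$ satisfies going-down is a localization of $R$. A ring $R$ satisfies (R$_1$) if $R_P$ is a valuation domain for every height one prime $P$ of $R$. Let $\operatorname{Spec}^1(R)$ denote the set of height one primes of $R$. A domain $R$ is a generalized Krull domain if (1) $R = \bigcap_{\mathfrak{p} \in \operatorname{Spec}^1(R)} R_{\mathfrak{p}}$, (2) every nonzero $r \in R$ lies in only finitely many height one primes, and (3) $R$ satisfies (R$_1$). *)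

theory Defs
  imports Main
begin

text \<open>A domain is modelled as a subring R of a field (of type 'a); its fraction field
is the set of quotients a/b with a, b in R, b nonzero.\<close>

definition subring :: "'a::field set \<Rightarrow> bool" where
  "subring R \<longleftrightarrow> 0 \<in> R \<and> 1 \<in> R \<and> (\<forall>x\<in>R. \<forall>y\<in>R. x + y \<in> R \<and> x - y \<in> R \<and> x * y \<in> R)"

definition frac :: "'a::field set \<Rightarrow> 'a set" where
  "frac R = {a / b | a b. a \<in> R \<and> b \<in> R \<and> b \<noteq> 0}"

definition ideal :: "'a::field set \<Rightarrow> 'a set \<Rightarrow> bool" where
  "ideal R I \<longleftrightarrow> I \<subseteq> R \<and> 0 \<in> I \<and> (\<forall>x\<in>I. \<forall>y\<in>I. x + y \<in> I) \<and> (\<forall>r\<in>R. \<forall>x\<in>I. r * x \<in> I)"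

definition prime_ideal :: "'a::field set \<Rightarrow> 'a set \<Rightarrow> bool" where
  "prime_ideal R P \<longleftrightarrow> ideal R P \<and> 1 \<notin> P \<and> (\<forall>a\<in>R. \<forall>b\<in>R. a * b \<in> P \<longrightarrow> a \<in> P \<or> b \<in> P)"

definition maximal_ideal :: "'a::field set \<Rightarrow> 'a set \<Rightarrow> bool" where
  "maximal_ideal R m \<longleftrightarrow> ideal R m \<and> 1 \<notin> m \<and>
     (\<forall>J. ideal R J \<and> 1 \<notin> J \<and> m \<subseteq> J \<longrightarrow> J = m)"

definition local_ring :: "'a::field set \<Rightarrow> bool" where
  "local_ring S \<longleftrightarrow> (\<exists>!m. maximal_ideal S m)"

definition overring :: "'a::field set \<Rightarrow> 'a set \<Rightarrow> bool" where
  "overring R S \<longleftrightarrow> subring S \<and> R \<subseteq> S \<and> S \<subseteq> frac R"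

definition going_down :: "'a::field set \<Rightarrow> 'a set \<Rightarrow> bool" where
  "going_down A B \<longleftrightarrow>
     (\<forall>p q Q. prime_ideal A p \<and> prime_ideal A q \<and> p \<subset> q \<and> prime_ideal B Q \<and> Q \<inter> A = q \<longrightarrow>
        (\<exists>P. prime_ideal B P \<and> P \<subseteq> Q \<and> P \<inter> A = p))"

definition mult_set :: "'a::field set \<Rightarrow> 'a set \<Rightarrow> bool" where
  "mult_set R M \<longleftrightarrow> M \<subseteq> R \<and> 1 \<in> M \<and> 0 \<notin> M \<and> (\<forall>x\<in>M. \<forall>y\<in>M. x * y \<in> M)"

text \<open>Localization R_M, realised inside the fraction field.\<close>
definition loc :: "'a::field set \<Rightarrow> 'a set \<Rightarrow> 'a set" where
  "loc R M = {a / s | a s. a \<in> R \<and> s \<in> M}"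

definition perinormal :: "'a::field set \<Rightarrow> bool" where
  "perinormal R \<longleftrightarrow>
     (\<forall>S. overring R S \<and> local_ring S \<and> going_down R S \<longrightarrow> (\<exists>M. mult_set R M \<and> S = loc R M))"

definition height_one_prime :: "'a::field set \<Rightarrow> 'a set \<Rightarrow> bool" where
  "height_one_prime R P \<longleftrightarrow> prime_ideal R P \<and> P \<noteq> {0} \<and>
     (\<forall>Q. prime_ideal R Q \<and> Q \<subseteq> P \<longrightarrow> Q = {0} \<or> Q = P)"

definition valuation_domain :: "'a::field set \<Rightarrow> bool" where
  "valuation_domain V \<longleftrightarrow> subring V \<and> (\<forall>x\<in>frac V. x \<in> V \<or> inverse x \<in> V)"

definition generalized_krull :: "'a::field set \<Rightarrow> bool" where
  "generalized_krull R \<longleftrightarrow>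
     R = frac R \<inter> (\<Inter>P\<in>{P. height_one_prime R P}. loc R (R - P)) \<and>
     (\<forall>r\<in>R. r \<noteq> 0 \<longrightarrow> finite {P. height_one_prime R P \<and> r \<in> P}) \<and>
     (\<forall>P. height_one_prime R P \<longrightarrow> valuation_domain (loc R (R - P)))"

end

theory Submission
  imports Defs
begin

text \<open>Let S be a local overring of R with going-down, m its maximal ideal and p = m \<inter> R.
Elements of R outside p are units of S, so R_p \<subseteq> S. Conversely, every height one
prime P \<subseteq> p lies under an ideal of S (m itself, or a prime obtained by going-down),
and since R_P is a valuation ring this forces S \<subseteq> R_P. For x = a/b in S only finitely
many height one primes contain b, and for each such P not inside p a power of some
s \<in> P - p multiplies x into R_P, because the valuation of R_P has rank one. The product t
of these powers lies outside p and t x lies in every R_P, hence in R; so x = t x / t \<in> R_p.\<close>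

lemma subring_zero: "subring R \<Longrightarrow> 0 \<in> R"
  and subring_one: "subring R \<Longrightarrow> 1 \<in> R"
  and subring_add: "subring R \<Longrightarrow> x \<in> R \<Longrightarrow> y \<in> R \<Longrightarrow> x + y \<in> R"
  and subring_mult: "subring R \<Longrightarrow> x \<in> R \<Longrightarrow> y \<in> R \<Longrightarrow> x * y \<in> R"
  unfolding subring_def by auto

lemma subring_power: "subring R \<Longrightarrow> x \<in> R \<Longrightarrow> x ^ n \<in> R"
  by (induction n) (auto intro: subring_one subring_mult)

lemma subring_prod:
  assumes "subring R" "finite A" "\<And>i. i \<in> A \<Longrightarrow> f i \<in> R"
  shows "prod f A \<in> R"
  using assms(2,3) by (induction A rule: finite_induct) (auto intro: assms(1) subring_one subring_mult)

lemma ideal_zero: "ideal R I \<Longrightarrow> 0 \<in> I"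
  and ideal_subset: "ideal R I \<Longrightarrow> I \<subseteq> R"
  and ideal_add: "ideal R I \<Longrightarrow> x \<in> I \<Longrightarrow> y \<in> I \<Longrightarrow> x + y \<in> I"
  and ideal_mult: "ideal R I \<Longrightarrow> r \<in> R \<Longrightarrow> x \<in> I \<Longrightarrow> r * x \<in> I"
  unfolding ideal_def by auto

lemma prime_ideal_ideal: "prime_ideal R P \<Longrightarrow> ideal R P"
  and prime_ideal_one_notin: "prime_ideal R P \<Longrightarrow> 1 \<notin> P"
  and prime_ideal_mult_notin:
    "prime_ideal R P \<Longrightarrow> a \<in> R - P \<Longrightarrow> b \<in> R - P \<Longrightarrow> a * b \<notin> P"
  unfolding prime_ideal_def by auto

lemma prime_ideal_zero: "prime_ideal R P \<Longrightarrow> 0 \<in> P"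
  and prime_ideal_subset: "prime_ideal R P \<Longrightarrow> P \<subseteq> R"
  by (auto dest: prime_ideal_ideal ideal_zero ideal_subset)

lemma height_one_prime_prime: "height_one_prime R P \<Longrightarrow> prime_ideal R P"
  unfolding height_one_prime_def by blast

lemma prime_ideal_prod_notin:
  assumes "prime_ideal R P" "subring R" "finite A" "\<And>i. i \<in> A \<Longrightarrow> f i \<in> R - P"
  shows "prod f A \<in> R - P"
  using assms(3,4)
proof (induction A rule: finite_induct)
  case empty
  then show ?case using assms(1,2) by (simp add: subring_one prime_ideal_one_notin)
next
  case (insert i A)
  then show ?case
    using assms(1,2) by (auto intro: subring_mult dest: prime_ideal_mult_notin)
qed

lemma prime_ideal_power_notin:
  assumes "prime_ideal R P" "subring R" "s \<in> R - P"
  shows "s ^ n \<in> R - P"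
  using prime_ideal_prod_notin[OF assms(1,2), of "{..<n}" "\<lambda>_. s"] assms(3) by simp

lemma mult_set_prime_compl:
  assumes "subring R" "prime_ideal R p"
  shows "mult_set R (R - p)"
  using assms unfolding mult_set_def
  by (auto intro: subring_one subring_mult
      dest: prime_ideal_one_notin prime_ideal_zero prime_ideal_mult_notin)

lemma prime_ideal_contract:
  assumes R: "subring R" and RS: "R \<subseteq> S" and Q: "prime_ideal S Q"
  shows "prime_ideal R (Q \<inter> R)"
  using Q RS subring_zero[OF R] unfolding prime_ideal_def ideal_def
  by (simp add: subset_eq subring_add[OF R] subring_mult[OF R])

lemma fracI: "a \<in> R \<Longrightarrow> b \<in> R \<Longrightarrow> b \<noteq> 0 \<Longrightarrow> a / b \<in> frac R"
  unfolding frac_def by blast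

lemma frac_mono: "R \<subseteq> V \<Longrightarrow> frac R \<subseteq> frac V"
  unfolding frac_def by blast

lemma mem_loc: "x \<in> loc R M \<longleftrightarrow> (\<exists>a s. a \<in> R \<and> s \<in> M \<and> x = a / s)"
  unfolding loc_def by blast

lemma subset_loc: "1 \<in> M \<Longrightarrow> R \<subseteq> loc R M"
  unfolding loc_def by (force intro: exI[of _ 1])

lemma subset_loc_prime_compl: "subring R \<Longrightarrow> prime_ideal R P \<Longrightarrow> R \<subseteq> loc R (R - P)"
  by (metis DiffI prime_ideal_one_notin subring_one subset_loc)

lemma divide_notin_loc_prime_compl:
  assumes "prime_ideal R P" "a \<in> R - P" "s \<in> P" "s \<noteq> 0"
  shows "a / s \<notin> loc R (R - P)"
proof
  assume "a / s \<in> loc R (R - P)"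
  then obtain c u where cu: "c \<in> R" "u \<in> R - P" "a / s = c / u" unfolding mem_loc by blast
  then have "u \<noteq> 0" using prime_ideal_zero[OF assms(1)] by auto
  then have "a * u = c * s" using cu assms(4) by (simp add: field_simps)
  moreover have "c * s \<in> P"
    using ideal_mult[OF prime_ideal_ideal[OF assms(1)] cu(1) assms(3)] by (simp add: mult.commute)
  moreover have "a * u \<notin> P" using assms(1,2) cu(2) by (rule prime_ideal_mult_notin)
  ultimately show False by metis
qed

lemma ideal_zero_set: "subring S \<Longrightarrow> ideal S {0}"
  unfolding ideal_def by (simp add: subring_zero)

lemma ideal_add_principal:
  assumes S: "subring S" and I: "ideal S I" and a: "a \<in> S"
  shows "ideal S {n + a * c | n c. n \<in> I \<and> c \<in> S}" (is "ideal S ?J")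
  unfolding ideal_def
proof (intro conjI ballI)
  show "?J \<subseteq> S"
    using ideal_subset[OF I] a by (auto intro: subring_add[OF S] subring_mult[OF S])
  show "0 \<in> ?J"
    using ideal_zero[OF I] subring_zero[OF S] by force
next
  fix x y assume "x \<in> ?J" "y \<in> ?J"
  then obtain n1 c1 n2 c2 where "n1 \<in> I" "c1 \<in> S" "x = n1 + a * c1" "n2 \<in> I" "c2 \<in> S" "y = n2 + a * c2"
    by blast
  moreover have "x + y = (n1 + n2) + a * (c1 + c2)" using calculation by (simp add: algebra_simps)
  ultimately show "x + y \<in> ?J"
    using ideal_add[OF I] subring_add[OF S] by blast
next
  fix r x assume r: "r \<in> S" and "x \<in> ?J"
  then obtain n c where "n \<in> I" "c \<in> S" "x = n + a * c" by blast
  moreover have "r * x = r * n + a * (r * c)" using calculation by (simp add: algebra_simps)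
  ultimately show "r * x \<in> ?J"
    using r ideal_mult[OF I] subring_mult[OF S] by blast
qed

lemma ideal_Union_chain:
  assumes "C \<noteq> {}" "\<And>I. I \<in> C \<Longrightarrow> ideal S I" "\<And>I J. I \<in> C \<Longrightarrow> J \<in> C \<Longrightarrow> I \<subseteq> J \<or> J \<subseteq> I"
  shows "ideal S (\<Union>C)"
  unfolding ideal_def
proof (intro conjI ballI)
  show "\<Union>C \<subseteq> S" using assms(2) ideal_subset by blast
  show "0 \<in> \<Union>C" using assms(1,2) ideal_zero by blast
next
  fix x y assume "x \<in> \<Union>C" "y \<in> \<Union>C"
  then obtain I J where "I \<in> C" "J \<in> C" "x \<in> I" "y \<in> J" by blast
  then show "x + y \<in> \<Union>C" using assms(3)[of I J] assms(2) ideal_add by blast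
next
  fix r x assume "r \<in> S" "x \<in> \<Union>C"
  then show "r * x \<in> \<Union>C" using assms(2) ideal_mult by blast
qed

lemma maximal_ideal_prime:
  assumes S: "subring S" and m: "maximal_ideal S m"
  shows "prime_ideal S m"
  unfolding prime_ideal_def
proof (intro conjI ballI impI)
  show m_ideal: "ideal S m" and "1 \<notin> m" using m unfolding maximal_ideal_def by auto
  fix a b assume ab: "a \<in> S" "b \<in> S" "a * b \<in> m"
  show "a \<in> m \<or> b \<in> m"
  proof (rule disjCI)
    assume "b \<notin> m"
    define J where "J = {n + b * c | n c. n \<in> m \<and> c \<in> S}"
    have J: "ideal S J" unfolding J_def using ideal_add_principal[OF S m_ideal ab(2)] .
    have "m \<subseteq> J" unfolding J_def using subring_zero[OF S] by force
    moreover have "b \<in> J" unfolding J_def using ideal_zero[OF m_ideal] subring_one[OF S] by force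
    ultimately have "1 \<in> J" using m J \<open>b \<notin> m\<close> unfolding maximal_ideal_def by blast
    then obtain n c where nc: "n \<in> m" "c \<in> S" "1 = n + b * c" unfolding J_def by blast
    then have "a = a * n + c * (a * b)" by (metis mult.left_commute distrib_left mult_1_right)
    moreover have "a * n + c * (a * b) \<in> m"
      using ideal_add[OF m_ideal ideal_mult[OF m_ideal ab(1) nc(1)] ideal_mult[OF m_ideal nc(2) ab(3)]] .
    ultimately show "a \<in> m" by metis
  qed
qed

lemma nonunit_in_maximal_ideal:
  assumes S: "subring S" and s: "s \<in> S" and nonunit: "\<not> (\<exists>y\<in>S. s * y = 1)"
  shows "\<exists>m. maximal_ideal S m \<and> s \<in> m"
proof -
  define A where "A = {I. ideal S I \<and> 1 \<notin> I \<and> s \<in> I}"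
  have "{n + s * c | n c. n \<in> {0} \<and> c \<in> S} \<in> A"
    unfolding A_def using ideal_add_principal[OF S ideal_zero_set[OF S] s] nonunit subring_one[OF S]
    by force
  moreover have "\<Union>C \<in> A" if "C \<noteq> {}" "subset.chain A C" for C
    using that ideal_Union_chain[of C S] unfolding A_def subset.chain_def by blast
  ultimately obtain M where "M \<in> A" "\<forall>X\<in>A. M \<subseteq> X \<longrightarrow> X = M"
    using subset_Zorn_nonempty[of A] by blast
  then show ?thesis unfolding A_def maximal_ideal_def by blast
qed

lemma local_ring_unit:
  assumes S: "subring S" "local_ring S" and m: "maximal_ideal S m" and s: "s \<in> S" "s \<notin> m"
  shows "\<exists>y\<in>S. s * y = 1"
  using nonunit_in_maximal_ideal[OF S(1) s(1)] S(2) m s(2) unfolding local_ring_def by blast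

lemma loc_subset_of_units:
  assumes S: "subring S" and RS: "R \<subseteq> S" and units: "\<And>s. s \<in> M \<Longrightarrow> \<exists>y\<in>S. s * y = 1"
  shows "loc R M \<subseteq> S"
proof
  fix x assume "x \<in> loc R M"
  then obtain a s where as: "a \<in> R" "s \<in> M" "x = a / s" unfolding mem_loc by blast
  then obtain y where y: "y \<in> S" "s * y = 1" using units by blast
  then have "x = a * y" using as(3) inverse_unique[OF y(2)] by (simp add: divide_inverse)
  then show "x \<in> S" using subring_mult[OF S] RS as(1) y(1) by blast
qed

lemma going_down_ideal_lying_over:
  assumes R: "subring R" and RS: "R \<subseteq> S" and Q: "prime_ideal S Q"
    and P: "prime_ideal R P" "P \<subseteq> Q \<inter> R" and gd: "going_down R S"
  shows "\<exists>Q'. ideal S Q' \<and> Q' \<inter> R = P"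
proof (cases "P = Q \<inter> R")
  case True
  then show ?thesis using prime_ideal_ideal[OF Q] by blast
next
  case False
  then have "P \<subset> Q \<inter> R" using P(2) by blast
  then obtain Q' where "prime_ideal S Q'" "Q' \<subseteq> Q" "Q' \<inter> R = P"
    using gd prime_ideal_contract[OF R RS Q] P(1) Q unfolding going_down_def by blast
  then show ?thesis using prime_ideal_ideal by blast
qed

text \<open>An ideal of S lying over P forces every element of S into the valuation ring R_P:
if x \<notin> R_P then 1/x = c/u with c \<in> P, so u = x c lies in that ideal and in R - P.\<close>

lemma subset_valuation_loc_if_lying_over:
  assumes R: "subring R" and P: "prime_ideal R P" and val: "valuation_domain (loc R (R - P))"
    and Q: "ideal S Q" "Q \<inter> R = P" and RS: "R \<subseteq> S" and S: "S \<subseteq> frac R"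
  shows "S \<subseteq> loc R (R - P)"
proof
  fix x assume x: "x \<in> S"
  let ?V = "loc R (R - P)"
  have RV: "R \<subseteq> ?V" using subset_loc_prime_compl[OF R P] .
  show "x \<in> ?V"
  proof (rule ccontr)
    assume x_notin: "x \<notin> ?V"
    have "x \<in> frac ?V" using frac_mono[OF RV] x S by blast
    then have "inverse x \<in> ?V" using val x_notin unfolding valuation_domain_def by blast
    then obtain c u where cu: "c \<in> R" "u \<in> R - P" "inverse x = c / u" unfolding mem_loc by blast
    have "x \<noteq> 0" using x_notin RV subring_zero[OF R] by blast
    moreover have "u \<noteq> 0" using cu prime_ideal_zero[OF P] by blast
    ultimately have "c \<noteq> 0" and u: "u = x * c" using cu by (auto simp: field_simps)
    have "c \<notin> P"
    proof
      assume "c \<in> P"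
      then have "x * c \<in> Q" using Q ideal_mult[OF Q(1) x] by blast
      then show False using u cu(2) Q(2) by blast
    qed
    moreover have "x = u / c" using u \<open>c \<noteq> 0\<close> by simp
    ultimately show False using cu x_notin unfolding mem_loc by blast
  qed
qed

lemma prime_ideal_infinitely_divisible:
  assumes R: "subring R" and val: "valuation_domain V" and RV: "R \<subseteq> V"
    and s: "s \<in> R" "s \<noteq> 0" and s_nonunit: "1 / s \<notin> V"
  shows "prime_ideal R {r \<in> R. \<forall>k. r / s ^ k \<in> V}" (is "prime_ideal R ?J")
  unfolding prime_ideal_def
proof (intro conjI ballI impI)
  have V: "subring V" using val unfolding valuation_domain_def by blast
  show "ideal R ?J"
    unfolding ideal_def
  proof (intro conjI ballI)
    show "?J \<subseteq> R" by blast
    show "0 \<in> ?J" using subring_zero[OF R] subring_zero[OF V] by simp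
  next
    fix x y assume "x \<in> ?J" "y \<in> ?J"
    then show "x + y \<in> ?J"
      using subring_add[OF R] subring_add[OF V] by (simp add: add_divide_distrib)
  next
    fix r x assume rx: "r \<in> R" "x \<in> ?J"
    then have "r * (x / s ^ k) \<in> V" for k using RV subring_mult[OF V] by blast
    then show "r * x \<in> ?J" using rx subring_mult[OF R] by simp
  qed
  show "1 \<notin> ?J" using s_nonunit power_one_right[of s] by (metis (lifting) mem_Collect_eq)
  fix a b assume ab: "a \<in> R" "b \<in> R" "a * b \<in> ?J"
  show "a \<in> ?J \<or> b \<in> ?J"
  proof (rule ccontr)
    assume "\<not> (a \<in> ?J \<or> b \<in> ?J)"
    then obtain i j where ij: "a / s ^ i \<notin> V" "b / s ^ j \<notin> V" using ab by blast
    have sV: "s ^ n \<in> V" for n using subring_power[OF V] RV s(1) by blast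
    have "a \<noteq> 0" "b \<noteq> 0" using ij subring_zero[OF V] by auto
    have "a / s ^ i \<in> frac V" "b / s ^ j \<in> frac V" using ab RV sV s(2) by (auto intro: fracI)
    then have "s ^ i / a \<in> V" "s ^ j / b \<in> V"
      using ij val unfolding valuation_domain_def by (auto simp: inverse_eq_divide)
    moreover have "(a * b) / s ^ (i + j + 1) \<in> V" using ab(3) by blast
    moreover have "1 / s = (s ^ i / a) * (s ^ j / b) * ((a * b) / s ^ (i + j + 1))"
      using \<open>a \<noteq> 0\<close> \<open>b \<noteq> 0\<close> s(2) by (simp add: field_simps power_add)
    ultimately have "1 / s \<in> V" using subring_mult[OF V] by metis
    then show False using s_nonunit by blast
  qed
qed

text \<open>The valuation of R_P has rank one: otherwise the elements r with r/s^k \<in> R_P for all k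
would form a prime of R strictly between 0 and P.\<close>

lemma height_one_power_mult_in_loc:
  assumes R: "subring R" and P: "height_one_prime R P" and val: "valuation_domain (loc R (R - P))"
    and s: "s \<in> P" "s \<noteq> 0" and x: "x \<in> frac R"
  shows "\<exists>k. s ^ k * x \<in> loc R (R - P)"
proof (rule ccontr)
  assume none: "\<not> ?thesis"
  let ?V = "loc R (R - P)"
  let ?J = "{r \<in> R. \<forall>k. r / s ^ k \<in> ?V}"
  have Pp: "prime_ideal R P" using height_one_prime_prime[OF P] .
  have RV: "R \<subseteq> ?V" using subset_loc_prime_compl[OF R Pp] .
  have V: "subring ?V" using val unfolding valuation_domain_def by blast
  have sR: "s \<in> R" using s(1) prime_ideal_subset[OF Pp] by blast
  have not_div: "r / s \<notin> ?V" if "r \<in> R - P" for r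
    using divide_notin_loc_prime_compl[OF Pp that s] .
  have "1 / s \<notin> ?V" using not_div subring_one[OF R] prime_ideal_one_notin[OF Pp] by blast
  then have J: "prime_ideal R ?J" using prime_ideal_infinitely_divisible[OF R val RV sR s(2)] by blast
  have "?J \<subseteq> P" using not_div by (fastforce dest: spec[of _ 1])
  obtain a b where ab: "a \<in> R" "b \<in> R" "b \<noteq> 0" "x = a / b" using x unfolding frac_def by blast
  have "a \<noteq> 0"
  proof
    assume "a = 0"
    then have "s ^ 0 * x \<in> ?V" using ab RV subring_zero[OF R] by auto
    then show False using none by blast
  qed
  have "b \<in> ?J"
  proof (intro CollectI conjI allI)
    fix k
    have "s ^ k * x \<in> frac ?V"
      using ab sR s(2) RV subring_mult[OF R] subring_power[OF R] by (auto intro!: fracI)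
    then have "inverse (s ^ k * x) \<in> ?V" using val none unfolding valuation_domain_def by blast
    moreover have "b / s ^ k = a * inverse (s ^ k * x)" using ab(3) \<open>a \<noteq> 0\<close> s(2) unfolding ab(4) by (simp add: field_simps)
    ultimately show "b / s ^ k \<in> ?V" using subring_mult[OF V] RV ab(1) by auto
  qed (use ab in blast)
  then have "?J = P" using P J \<open>?J \<subseteq> P\<close> ab(3) unfolding height_one_prime_def by blast
  then have "s / s ^ 2 \<in> ?V" using s(1) by blast
  then show False using \<open>1 / s \<notin> ?V\<close> s(2) by (simp add: power2_eq_square)
qed

lemma generalized_krull_valuation:
  "generalized_krull R \<Longrightarrow> height_one_prime R P \<Longrightarrow> valuation_domain (loc R (R - P))"
  unfolding generalized_krull_def by blast

lemma generalized_krull_common_multiplier: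
  assumes R: "subring R" and K: "generalized_krull R" and p: "prime_ideal R p"
    and x: "x \<in> frac R" and below_p: "\<And>P. height_one_prime R P \<Longrightarrow> P \<subseteq> p \<Longrightarrow> x \<in> loc R (R - P)"
  shows "\<exists>t\<in>R - p. \<forall>P. height_one_prime R P \<longrightarrow> t * x \<in> loc R (R - P)"
proof -
  have V: "subring (loc R (R - P))" if "height_one_prime R P" for P
    using generalized_krull_valuation[OF K that] unfolding valuation_domain_def by blast
  have RV: "R \<subseteq> loc R (R - P)" if "height_one_prime R P" for P
    using subset_loc_prime_compl[OF R height_one_prime_prime[OF that]] .
  obtain a b where ab: "a \<in> R" "b \<in> R" "b \<noteq> 0" "x = a / b" using x unfolding frac_def by blast
  define F where "F = {P. height_one_prime R P \<and> b \<in> P \<and> \<not> P \<subseteq> p}"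
  have "finite F"
    using K ab(2,3) unfolding generalized_krull_def F_def by (auto elim: rev_finite_subset)
  have "\<exists>t. t \<in> R - p \<and> t * x \<in> loc R (R - P)" if "P \<in> F" for P
  proof -
    from that obtain s where P: "height_one_prime R P" and s: "s \<in> P" "s \<notin> p"
      unfolding F_def by blast
    then have "s \<in> R" "s \<noteq> 0"
      using height_one_prime_prime prime_ideal_subset prime_ideal_zero[OF p] by blast+
    then obtain k where "s ^ k * x \<in> loc R (R - P)"
      using height_one_power_mult_in_loc[OF R P generalized_krull_valuation[OF K P] s(1) _ x] by blast
    moreover have "s ^ k \<in> R - p" using prime_ideal_power_notin[OF p R] \<open>s \<in> R\<close> s(2) by blast
    ultimately show ?thesis by blast
  qed
  then obtain T where T: "\<And>P. P \<in> F \<Longrightarrow> T P \<in> R - p \<and> T P * x \<in> loc R (R - P)" by metis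
  have t: "prod T F \<in> R - p" using prime_ideal_prod_notin[OF p R \<open>finite F\<close>] T by blast
  have "prod T F * x \<in> loc R (R - P)" if P: "height_one_prime R P" for P
  proof (cases "P \<in> F")
    case True
    have "prod T F * x = prod T (F - {P}) * (T P * x)"
      using prod.remove[OF \<open>finite F\<close> True, of T] by (simp add: ac_simps)
    moreover have "prod T (F - {P}) \<in> loc R (R - P)" using subring_prod[OF R] \<open>finite F\<close> T RV[OF P] by blast
    ultimately show ?thesis using subring_mult[OF V[OF P]] T[OF True] by metis
  next
    case False
    have "x \<in> loc R (R - P)"
    proof (cases "P \<subseteq> p")
      case False
      then have "b \<notin> P" using \<open>P \<notin> F\<close> P unfolding F_def by blast
      then show ?thesis using ab unfolding mem_loc by blast
    qed (use below_p P in blast)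
    then show ?thesis using subring_mult[OF V[OF P]] RV[OF P] t by blast
  qed
  then show ?thesis using t by blast
qed

lemma generalized_krull_mem_loc:
  assumes R: "subring R" and K: "generalized_krull R" and p: "prime_ideal R p"
    and x: "x \<in> frac R" and below_p: "\<And>P. height_one_prime R P \<Longrightarrow> P \<subseteq> p \<Longrightarrow> x \<in> loc R (R - P)"
  shows "x \<in> loc R (R - p)"
proof -
  obtain t where t: "t \<in> R - p" and tx: "\<And>P. height_one_prime R P \<Longrightarrow> t * x \<in> loc R (R - P)"
    using generalized_krull_common_multiplier[OF assms] by blast
  obtain a b where "a \<in> R" "b \<in> R" "b \<noteq> 0" "x = a / b" using x unfolding frac_def by blast
  then have "t * x \<in> frac R" using t subring_mult[OF R] by (auto intro: fracI)
  then have "t * x \<in> R" using K tx unfolding generalized_krull_def by blast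
  moreover have "x = (t * x) / t" using t prime_ideal_zero[OF p] by auto
  ultimately show ?thesis using t unfolding mem_loc by blast
qed

theorem theorem3p10:
  fixes R :: "'a::field set"
  assumes "subring R"
    and "generalized_krull R"
  shows "perinormal R"
  unfolding perinormal_def
proof (intro allI impI)
  fix S assume "overring R S \<and> local_ring S \<and> going_down R S"
  then have S: "subring S" "R \<subseteq> S" "S \<subseteq> frac R" and "local_ring S" "going_down R S"
    unfolding overring_def by blast+
  then obtain m where m: "maximal_ideal S m" unfolding local_ring_def by blast
  have m_prime: "prime_ideal S m" using maximal_ideal_prime[OF S(1) m] .
  have p: "prime_ideal R (m \<inter> R)" using prime_ideal_contract[OF assms(1) S(2) m_prime] .
  have "loc R (R - m \<inter> R) \<subseteq> S"
  proof (rule loc_subset_of_units[OF S(1,2)])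
    fix s assume "s \<in> R - m \<inter> R"
    then show "\<exists>y\<in>S. s * y = 1" using local_ring_unit[OF S(1) \<open>local_ring S\<close> m] S(2) by blast
  qed
  moreover have "S \<subseteq> loc R (R - m \<inter> R)"
  proof
    fix x assume "x \<in> S"
    show "x \<in> loc R (R - m \<inter> R)"
    proof (rule generalized_krull_mem_loc[OF assms p])
      show "x \<in> frac R" using \<open>x \<in> S\<close> S(3) by blast
      fix P assume P: "height_one_prime R P" "P \<subseteq> m \<inter> R"
      have P_prime: "prime_ideal R P" using height_one_prime_prime[OF P(1)] .
      obtain Q where Q: "ideal S Q" "Q \<inter> R = P"
        using going_down_ideal_lying_over[OF assms(1) S(2) m_prime P_prime P(2) \<open>going_down R S\<close>] by blast
      from subset_valuation_loc_if_lying_over[OF assms(1) P_prime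
          generalized_krull_valuation[OF assms(2) P(1)] Q S(2,3)]
      show "x \<in> loc R (R - P)" using \<open>x \<in> S\<close> by blast
    qed
  qed
  ultimately show "\<exists>M. mult_set R M \<and> S = loc R M" using mult_set_prime_compl[OF assms(1) p] by blast
qed

end
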